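(* Let $Z\subseteq(\mathbb P^1)^d$ be the common vanishing locus of the multi-homogenizations $P^h$ of all linear forms $P=\sum_{\lambda\in\Phi^+}c_\lambda x_\lambda$ vanishing on $\mathfrak h$ (i.e. with $\sum_\lambda c_\lambda\lambda=0$). Then $Z=\bar{\mathfrak h}$ as sets.
   Context: Let $\mathfrak g$ be a complex semisimple Lie algebra, $\mathfrak h$ a Cartan subalgebra, $\Phi\subset\mathfrak h^*$ its root system, $\Phi^+$ a fixed set of positive roots, $d=|\Phi^+|$. Identify $\mathbb C$ with $\{[x_0:x_1]:x_0\ne0\}\subset\mathbb P^1$ via $c\mapsto[1:c]$, $\infty=[0:1]$, and write points of $(\mathbb P^1)^d$ as $(x_\lambda)_{\lambda\in\Phi^+}$, $x_\lambda=[x_{\lambda,0}:x_{\lambda,1}]$. Identify $\mathfrak h$ with its image under the injective linear map $h\mapsto(\lambda(h))_{\lambda\in\Phi^+}\in\mathbb C^d\subset(\mathbb P^1)^d$; $\bar{\mathfrak h}$ (the wonderful compactification of $\mathfrak h$) denotes the Zariski closure of $\mathfrak h$ in $(\mathbb P^1)^d$. For a linear form $P$ with support $\mathrm{supp}(P)=\{\lambda:c_\lambda\ne0\}$, $P^h=\sum_{\lambda\in\mathrm{supp}P}c_\lambda x_{\lambda,1}\prod_{\mu\in\mathrm{supp}P,\mu\ne\lambda}x_{\mu,0}$. *)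

theory Defs
  imports "HOL-Analysis.Analysis"
begin

text \<open>The roots of a complex semisimple Lie algebra with respect to a Cartan subalgebra
  form a reduced crystallographic root system in the real form of the dual of the Cartan
  subalgebra; conversely every such root system arises this way. We model the real form of
  the dual of the Cartan subalgebra as the Euclidean space real^'n.\<close>

definition root_system :: "(real ^ 'n) set \<Rightarrow> bool" where
  "root_system \<Phi> \<longleftrightarrow>
     finite \<Phi> \<and> 0 \<notin> \<Phi> \<and> span \<Phi> = UNIV \<and>
     (\<forall>\<alpha>\<in>\<Phi>. \<forall>\<beta>\<in>\<Phi>. \<beta> - (2 * (\<beta> \<bullet> \<alpha>) / (\<alpha> \<bullet> \<alpha>)) *\<^sub>R \<alpha> \<in> \<Phi>) \<and>
     (\<forall>\<alpha>\<in>\<Phi>. \<forall>\<beta>\<in>\<Phi>. 2 * (\<beta> \<bullet> \<alpha>) / (\<alpha> \<bullet> \<alpha>) \<in> \<int>) \<and>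
     (\<forall>\<alpha>\<in>\<Phi>. \<forall>c::real. c *\<^sub>R \<alpha> \<in> \<Phi> \<longrightarrow> c = 1 \<or> c = -1)"

definition positive_system :: "(real ^ 'n) set \<Rightarrow> (real ^ 'n) set \<Rightarrow> bool" where
  "positive_system \<Phi> \<Phi>p \<longleftrightarrow>
     (\<exists>v. (\<forall>\<alpha>\<in>\<Phi>. v \<bullet> \<alpha> \<noteq> 0) \<and> \<Phi>p = {\<alpha>\<in>\<Phi>. v \<bullet> \<alpha> > 0})"

text \<open>Evaluation of a root (a real linear form) at an element h of the complex Cartan
  subalgebra complex^'n.\<close>
definition root_eval :: "real ^ 'n \<Rightarrow> complex ^ 'n \<Rightarrow> complex" where
  "root_eval \<gamma> h = (\<Sum>i\<in>UNIV. complex_of_real (\<gamma> $ i) * h $ i)"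

text \<open>A point of (P^1)^I (I finite) is represented by homogeneous coordinates
  x i = (x_{i,0}, x_{i,1}) \<noteq> (0,0) for i in I; outside I we normalise to (0,0).
  Subsets of (P^1)^I are represented by the (scaling-invariant) sets of all their
  representatives.\<close>

definition P1pts :: "'a set \<Rightarrow> ('a \<Rightarrow> complex \<times> complex) set" where
  "P1pts I = {x. (\<forall>i\<in>I. x i \<noteq> (0, 0)) \<and> (\<forall>i. i \<notin> I \<longrightarrow> x i = (0, 0))}"

text \<open>Polynomials in the variables x_{i,0} (= (i,False)) and x_{i,1} (= (i,True)):
  coefficient functions on exponent vectors with finite support.\<close>

definition mhpoly :: "'a set \<Rightarrow> (('a \<times> bool \<Rightarrow> nat) \<Rightarrow> complex) \<Rightarrow> bool" where
  "mhpoly I p \<longleftrightarrow> finite {m. p m \<noteq> 0} \<and>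
     (\<exists>deg. \<forall>m. p m \<noteq> 0 \<longrightarrow>
        (\<forall>i\<in>I. m (i, False) + m (i, True) = deg i) \<and>
        (\<forall>i. i \<notin> I \<longrightarrow> m (i, False) = 0 \<and> m (i, True) = 0))"

definition mh_eval :: "'a set \<Rightarrow> (('a \<times> bool \<Rightarrow> nat) \<Rightarrow> complex) \<Rightarrow> ('a \<Rightarrow> complex \<times> complex) \<Rightarrow> complex" where
  "mh_eval I p x = (\<Sum>m | p m \<noteq> 0. p m * (\<Prod>i\<in>I. fst (x i) ^ m (i, False) * snd (x i) ^ m (i, True)))"

definition zero_set :: "'a set \<Rightarrow> (('a \<times> bool \<Rightarrow> nat) \<Rightarrow> complex) set \<Rightarrow> ('a \<Rightarrow> complex \<times> complex) set" where
  "zero_set I S = {x \<in> P1pts I. \<forall>p\<in>S. mh_eval I p x = 0}"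

definition zariski_closed :: "'a set \<Rightarrow> ('a \<Rightarrow> complex \<times> complex) set \<Rightarrow> bool" where
  "zariski_closed I C \<longleftrightarrow> (\<exists>S. (\<forall>p\<in>S. mhpoly I p) \<and> C = zero_set I S)"

definition zariski_closure :: "'a set \<Rightarrow> ('a \<Rightarrow> complex \<times> complex) set \<Rightarrow> ('a \<Rightarrow> complex \<times> complex) set" where
  "zariski_closure I A = \<Inter>{C. zariski_closed I C \<and> A \<subseteq> C}"

text \<open>All representatives of the points (lambda(h))_{lambda in Phi+}, h in the Cartan
  subalgebra, where c in C is identified with [1:c].\<close>
definition cartan_in_P1 :: "(real ^ 'n) set \<Rightarrow> (real ^ 'n \<Rightarrow> complex \<times> complex) set" where
  "cartan_in_P1 \<Phi>p = {x \<in> P1pts \<Phi>p. \<exists>h :: complex ^ 'n.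
      \<forall>\<gamma>\<in>\<Phi>p. \<exists>t. t \<noteq> 0 \<and> x \<gamma> = (t, t * root_eval \<gamma> h)}"

text \<open>Multi-homogenization P^h of the linear form P = sum c_lambda x_lambda, evaluated
  at homogeneous coordinates x.\<close>
definition homogenize_eval :: "(real ^ 'n) set \<Rightarrow> (real ^ 'n \<Rightarrow> complex) \<Rightarrow> (real ^ 'n \<Rightarrow> complex \<times> complex) \<Rightarrow> complex" where
  "homogenize_eval \<Phi>p c x =
     (let S = {\<gamma>\<in>\<Phi>p. c \<gamma> \<noteq> 0} in
      \<Sum>\<gamma>\<in>S. c \<gamma> * snd (x \<gamma>) * (\<Prod>\<mu>\<in>S - {\<gamma>}. fst (x \<mu>)))"

definition Zset :: "(real ^ 'n) set \<Rightarrow> (real ^ 'n \<Rightarrow> complex \<times> complex) set" where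
  "Zset \<Phi>p = {x \<in> P1pts \<Phi>p. \<forall>c :: real ^ 'n \<Rightarrow> complex.
      (\<forall>h :: complex ^ 'n. (\<Sum>\<gamma>\<in>\<Phi>p. c \<gamma> * root_eval \<gamma> h) = 0) \<longrightarrow>
      homogenize_eval \<Phi>p c x = 0}"

end

theory Submission
  imports Defs
begin

text \<open>Every P^h is a multi-homogeneous polynomial vanishing on the Cartan subalgebra, so Z is
  Zariski closed and contains the closure. Conversely, take x in Z and split the positive roots into
  the set F of roots with finite coordinate x_lambda = [1:a_lambda] and the set T of roots with
  x_lambda = infinity. The equations P^h supported in F say that a respects every linear relation
  among the roots of F, so a = (lambda(h0)) on F for some h0; the equations supported in F plus one
  root mu of T say that mu is not in the span of F, so some h1 vanishes on F but on no root of T.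
  The points h0 + h1/u of the Cartan subalgebra tend to x as u tends to 0, and a polynomial
  vanishing along this curve vanishes at its limit.\<close>

lemma exists_inner_eq_if_relations_respected:
  fixes F :: "'a::euclidean_space set" and a :: "'a \<Rightarrow> real"
  assumes fin: "finite F"
    and rel: "\<And>c. (\<Sum>l\<in>F. c l *\<^sub>R l) = 0 \<Longrightarrow> (\<Sum>l\<in>F. c l * a l) = 0"
  shows "\<exists>w. \<forall>l\<in>F. l \<bullet> w = a l"
proof -
  obtain B where B: "B \<subseteq> F" "independent B" "F \<subseteq> span B"
    using maximal_independent_subset by blast
  have finB: "finite B" using B(1) fin finite_subset by blast
  obtain g :: "'a \<Rightarrow> real" where g: "linear g" "\<forall>b\<in>B. g b = a b"
    using linear_independent_extend[OF B(2)] by blast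
  have restrict: "(\<Sum>m\<in>F. if m \<in> B then f m else 0) = sum f B" for f :: "'a \<Rightarrow> 'b::comm_monoid_add"
    using fin B(1) by (simp add: sum.inter_restrict[symmetric] Int_absorb1)
  have "g l = a l" if l: "l \<in> F" for l
  proof -
    obtain u where u: "(\<Sum>b\<in>B. u b *\<^sub>R b) = l"
      using l B(3) span_finite[OF finB] by auto
    define c where "c m = (if m \<in> B then u m else 0) - (if m = l then 1 else 0)" for m
    have "(\<Sum>m\<in>F. c m *\<^sub>R m) = (\<Sum>b\<in>B. u b *\<^sub>R b) - l"
      using fin l restrict[of "\<lambda>m. u m *\<^sub>R m"]
      by (simp add: c_def scaleR_diff_left sum_subtractf if_distrib[of "\<lambda>r. r *\<^sub>R _"] cong: if_cong)
    then have "(\<Sum>m\<in>F. c m * a m) = 0" using u by (intro rel) simp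
    moreover have "(\<Sum>m\<in>F. c m * a m) = (\<Sum>b\<in>B. u b * a b) - a l"
      using fin l restrict[of "\<lambda>m. u m * a m"]
      by (simp add: c_def left_diff_distrib sum_subtractf if_distrib[of "\<lambda>r. r * _"] cong: if_cong)
    moreover have "g l = (\<Sum>b\<in>B. u b * a b)"
      unfolding u[symmetric] using g by (simp add: linear_sum linear_scale cong: sum.cong)
    ultimately show ?thesis by simp
  qed
  then have "\<forall>l\<in>F. l \<bullet> adjoint g 1 = a l"
    by (simp add: adjoint_works[OF g(1)])
  then show ?thesis ..
qed

lemma root_eval_add_scaled:
  "root_eval \<gamma> (\<chi> i. h $ i + s * k $ i) = root_eval \<gamma> h + s * root_eval \<gamma> k"
  by (simp add: root_eval_def sum.distrib sum_distrib_left algebra_simps)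

lemma root_eval_Complex:
  "root_eval \<gamma> (\<chi> i. Complex (u $ i) (v $ i)) = Complex (\<gamma> \<bullet> u) (\<gamma> \<bullet> v)"
  by (simp add: root_eval_def inner_vec_def complex_eq_iff Re_sum Im_sum)

lemma root_eval_sum_scaleR:
  "(\<Sum>\<gamma>\<in>S. complex_of_real (c \<gamma>) * root_eval \<gamma> h) = root_eval (\<Sum>\<gamma>\<in>S. c \<gamma> *\<^sub>R \<gamma>) h"
  by (simp add: root_eval_def sum_distrib_left sum_distrib_right sum.swap[of _ S] mult.assoc)

lemma exists_root_eval_eq:
  fixes F :: "(real ^ 'n) set" and a :: "real ^ 'n \<Rightarrow> complex"
  assumes fin: "finite F"
    and rel: "\<And>c. (\<Sum>l\<in>F. c l *\<^sub>R l) = 0 \<Longrightarrow> (\<Sum>l\<in>F. complex_of_real (c l) * a l) = 0"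
  shows "\<exists>h :: complex ^ 'n. \<forall>l\<in>F. root_eval l h = a l"
proof -
  have "(\<Sum>l\<in>F. c l * Re (a l)) = 0 \<and> (\<Sum>l\<in>F. c l * Im (a l)) = 0"
    if "(\<Sum>l\<in>F. c l *\<^sub>R l) = 0" for c
    using rel[OF that] by (simp add: complex_eq_iff Re_sum Im_sum)
  then obtain u v where u: "\<forall>l\<in>F. l \<bullet> u = Re (a l)" and v: "\<forall>l\<in>F. l \<bullet> v = Im (a l)"
    using exists_inner_eq_if_relations_respected[OF fin, of "\<lambda>l. Re (a l)"]
      exists_inner_eq_if_relations_respected[OF fin, of "\<lambda>l. Im (a l)"] by blast
  have "\<forall>l\<in>F. root_eval l (\<chi> i. Complex (u $ i) (v $ i)) = a l"
    using u v by (simp add: root_eval_Complex complex_eq_iff)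
  then show ?thesis ..
qed

lemma exists_root_eval_separating:
  fixes F :: "(real ^ 'n) set"
  assumes fin: "finite F" and \<mu>: "\<mu> \<notin> span F"
  shows "\<exists>h :: complex ^ 'n. (\<forall>l\<in>F. root_eval l h = 0) \<and> root_eval \<mu> h \<noteq> 0"
proof -
  have \<mu>F: "\<mu> \<notin> F" using \<mu> span_base by blast
  have "\<exists>h :: complex ^ 'n. \<forall>l\<in>insert \<mu> F. root_eval l h = (if l = \<mu> then 1 else 0)"
  proof (rule exists_root_eval_eq)
    fix c assume c: "(\<Sum>l\<in>insert \<mu> F. c l *\<^sub>R l) = 0"
    have "c \<mu> = 0"
    proof (rule ccontr)
      assume "c \<mu> \<noteq> 0"
      have "c \<mu> *\<^sub>R \<mu> = - (\<Sum>l\<in>F. c l *\<^sub>R l)"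
        using c fin \<mu>F by (simp add: eq_neg_iff_add_eq_0)
      then have "(1 / c \<mu>) *\<^sub>R (c \<mu> *\<^sub>R \<mu>) = (1 / c \<mu>) *\<^sub>R - (\<Sum>l\<in>F. c l *\<^sub>R l)"
        by (rule arg_cong)
      then have "\<mu> = (1 / c \<mu>) *\<^sub>R - (\<Sum>l\<in>F. c l *\<^sub>R l)"
        using \<open>c \<mu> \<noteq> 0\<close> by simp
      also have "\<dots> \<in> span F"
        by (intro span_scale span_neg span_sum span_base)
      finally have "\<mu> \<in> span F" .
      then show False using \<mu> by blast
    qed
    then show "(\<Sum>l\<in>insert \<mu> F. complex_of_real (c l) * (if l = \<mu> then 1 else 0)) = 0"
      using fin \<mu>F by (simp add: if_distrib cong: if_cong)
  qed (use fin in simp)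
  then show ?thesis using \<mu>F by (metis insertCI zero_neq_one)
qed

lemma exists_root_eval_avoiding:
  assumes "finite T"
    and "\<forall>\<mu>\<in>T. \<exists>h. (\<forall>l\<in>F. root_eval l h = 0) \<and> root_eval \<mu> h \<noteq> 0"
  shows "\<exists>h. (\<forall>l\<in>F. root_eval l h = 0) \<and> (\<forall>\<mu>\<in>T. root_eval \<mu> h \<noteq> 0)"
  using assms
proof (induction T rule: finite_induct)
  case empty
  show ?case by (rule exI[of _ 0]) (simp add: root_eval_def)
next
  case (insert \<nu> T)
  then obtain h where h: "\<forall>l\<in>F. root_eval l h = 0" "\<forall>\<mu>\<in>T. root_eval \<mu> h \<noteq> 0" by auto
  obtain k where k: "\<forall>l\<in>F. root_eval l k = 0" "root_eval \<nu> k \<noteq> 0" using insert.prems by auto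
  have "finite ((\<lambda>\<mu>. - root_eval \<mu> h / root_eval \<mu> k) ` insert \<nu> T)"
    using insert.hyps by simp
  then obtain s :: complex where s: "s \<notin> (\<lambda>\<mu>. - root_eval \<mu> h / root_eval \<mu> k) ` insert \<nu> T"
    using ex_new_if_finite[OF infinite_UNIV_char_0] by blast
  \<comment> \<open>Only finitely many s make h + s k vanish on a root of the enlarged set.\<close>
  have "root_eval \<mu> h + s * root_eval \<mu> k \<noteq> 0" if \<mu>: "\<mu> \<in> insert \<nu> T" for \<mu>
  proof (cases "root_eval \<mu> k = 0")
    case True
    then show ?thesis using \<mu> h k by auto
  next
    case False
    have "s \<noteq> - root_eval \<mu> h / root_eval \<mu> k" using s \<mu> by blast
    with False show ?thesis by (auto simp: field_simps add_eq_0_iff)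
  qed
  then show ?case
    using h k by (intro exI[of _ "\<chi> i. h $ i + s * k $ i"]) (simp add: root_eval_add_scaled)
qed

definition homog_monomial :: "'a set \<Rightarrow> ('a \<Rightarrow> complex) \<Rightarrow> 'a \<Rightarrow> ('a \<times> bool \<Rightarrow> nat)" where
  "homog_monomial P c \<gamma> = (\<lambda>(\<mu>, b). if b then (if \<mu> = \<gamma> then 1 else 0)
      else (if \<mu> \<in> {\<gamma>\<in>P. c \<gamma> \<noteq> 0} - {\<gamma>} then 1 else 0))"

definition homog_poly :: "'a set \<Rightarrow> ('a \<Rightarrow> complex) \<Rightarrow> ('a \<times> bool \<Rightarrow> nat) \<Rightarrow> complex" where
  "homog_poly P c m = (\<Sum>\<gamma>\<in>{\<gamma>\<in>P. c \<gamma> \<noteq> 0}. if m = homog_monomial P c \<gamma> then c \<gamma> else 0)"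

lemma homog_monomial_eq_iff: "homog_monomial P c \<gamma> = homog_monomial P c \<gamma>' \<longleftrightarrow> \<gamma> = \<gamma>'"
proof
  assume "homog_monomial P c \<gamma> = homog_monomial P c \<gamma>'"
  then have "homog_monomial P c \<gamma> (\<gamma>, True) = homog_monomial P c \<gamma>' (\<gamma>, True)" by simp
  then show "\<gamma> = \<gamma>'" by (simp add: homog_monomial_def split: if_splits)
qed simp

lemma homog_poly_monomial:
  assumes "finite P" "\<gamma> \<in> {\<gamma>\<in>P. c \<gamma> \<noteq> 0}"
  shows "homog_poly P c (homog_monomial P c \<gamma>) = c \<gamma>"
  using assms by (simp add: homog_poly_def homog_monomial_eq_iff eq_commute[of \<gamma>])

lemma homog_poly_support:
  assumes "finite P"
  shows "{m. homog_poly P c m \<noteq> 0} = homog_monomial P c ` {\<gamma>\<in>P. c \<gamma> \<noteq> 0}"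
proof
  show "{m. homog_poly P c m \<noteq> 0} \<subseteq> homog_monomial P c ` {\<gamma>\<in>P. c \<gamma> \<noteq> 0}"
  proof
    fix m assume "m \<in> {m. homog_poly P c m \<noteq> 0}"
    then obtain \<gamma> where "\<gamma> \<in> {\<gamma>\<in>P. c \<gamma> \<noteq> 0}" "(if m = homog_monomial P c \<gamma> then c \<gamma> else 0) \<noteq> 0"
      unfolding homog_poly_def by (blast dest: sum.not_neutral_contains_not_neutral)
    then show "m \<in> homog_monomial P c ` {\<gamma>\<in>P. c \<gamma> \<noteq> 0}" by (auto split: if_splits)
  qed
  show "homog_monomial P c ` {\<gamma>\<in>P. c \<gamma> \<noteq> 0} \<subseteq> {m. homog_poly P c m \<noteq> 0}"
    using homog_poly_monomial[OF assms] by auto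
qed

lemma mhpoly_homog_poly:
  assumes fin: "finite P"
  shows "mhpoly P (homog_poly P c)"
  unfolding mhpoly_def
proof
  show "finite {m. homog_poly P c m \<noteq> 0}" using fin by (simp add: homog_poly_support)
  show "\<exists>deg. \<forall>m. homog_poly P c m \<noteq> 0 \<longrightarrow>
      (\<forall>\<mu>\<in>P. m (\<mu>, False) + m (\<mu>, True) = deg \<mu>) \<and>
      (\<forall>\<mu>. \<mu> \<notin> P \<longrightarrow> m (\<mu>, False) = 0 \<and> m (\<mu>, True) = 0)"
  proof (rule exI[of _ "\<lambda>\<mu>. if c \<mu> \<noteq> 0 then 1 else 0"], intro allI impI)
    fix m assume "homog_poly P c m \<noteq> 0"
    then obtain \<gamma> where "\<gamma> \<in> {\<gamma>\<in>P. c \<gamma> \<noteq> 0}" "m = homog_monomial P c \<gamma>"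
      using homog_poly_support[OF fin] by blast
    then show "(\<forall>\<mu>\<in>P. m (\<mu>, False) + m (\<mu>, True) = (if c \<mu> \<noteq> 0 then 1 else 0)) \<and>
        (\<forall>\<mu>. \<mu> \<notin> P \<longrightarrow> m (\<mu>, False) = 0 \<and> m (\<mu>, True) = 0)"
      by (auto simp: homog_monomial_def)
  qed
qed

lemma mh_eval_homog_monomial:
  assumes fin: "finite P" and \<gamma>: "\<gamma> \<in> {\<gamma>\<in>P. c \<gamma> \<noteq> 0}"
  shows "(\<Prod>\<mu>\<in>P. fst (x \<mu>) ^ homog_monomial P c \<gamma> (\<mu>, False) * snd (x \<mu>) ^ homog_monomial P c \<gamma> (\<mu>, True))
       = snd (x \<gamma>) * (\<Prod>\<mu>\<in>{\<gamma>\<in>P. c \<gamma> \<noteq> 0} - {\<gamma>}. fst (x \<mu>))"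
proof -
  have "(\<Prod>\<mu>\<in>P. fst (x \<mu>) ^ homog_monomial P c \<gamma> (\<mu>, False))
      = (\<Prod>\<mu>\<in>P. if \<mu> \<in> {\<gamma>\<in>P. c \<gamma> \<noteq> 0} - {\<gamma>} then fst (x \<mu>) else 1)"
    by (rule prod.cong) (auto simp: homog_monomial_def)
  also have "\<dots> = (\<Prod>\<mu>\<in>P \<inter> ({\<gamma>\<in>P. c \<gamma> \<noteq> 0} - {\<gamma>}). fst (x \<mu>))"
    by (rule prod.inter_restrict[OF fin, symmetric])
  also have "\<dots> = (\<Prod>\<mu>\<in>{\<gamma>\<in>P. c \<gamma> \<noteq> 0} - {\<gamma>}. fst (x \<mu>))"
    by (rule prod.cong) auto
  finally have "(\<Prod>\<mu>\<in>P. fst (x \<mu>) ^ homog_monomial P c \<gamma> (\<mu>, False)) = \<dots>" .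
  moreover have "(\<Prod>\<mu>\<in>P. snd (x \<mu>) ^ homog_monomial P c \<gamma> (\<mu>, True))
      = (\<Prod>\<mu>\<in>P. if \<mu> = \<gamma> then snd (x \<mu>) else 1)"
    by (rule prod.cong) (auto simp: homog_monomial_def)
  moreover have "\<dots> = snd (x \<gamma>)" using fin \<gamma> by simp
  ultimately show ?thesis by (simp add: prod.distrib mult.commute)
qed

lemma mh_eval_homog_poly:
  assumes fin: "finite P"
  shows "mh_eval P (homog_poly P c) x = homogenize_eval P c x"
proof -
  let ?S = "{\<gamma>\<in>P. c \<gamma> \<noteq> 0}"
  have inj: "inj_on (homog_monomial P c) ?S" by (auto simp: inj_on_def homog_monomial_eq_iff)
  have "mh_eval P (homog_poly P c) x = (\<Sum>\<gamma>\<in>?S. homog_poly P c (homog_monomial P c \<gamma>) *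
      (\<Prod>\<mu>\<in>P. fst (x \<mu>) ^ homog_monomial P c \<gamma> (\<mu>, False) * snd (x \<mu>) ^ homog_monomial P c \<gamma> (\<mu>, True)))"
    unfolding mh_eval_def homog_poly_support[OF fin] by (rule sum.reindex[OF inj, unfolded comp_def])
  also have "\<dots> = (\<Sum>\<gamma>\<in>?S. c \<gamma> * snd (x \<gamma>) * (\<Prod>\<mu>\<in>?S - {\<gamma>}. fst (x \<mu>)))"
    by (rule sum.cong) (auto simp: homog_poly_monomial[OF fin] mh_eval_homog_monomial[OF fin])
  finally show ?thesis by (simp add: homogenize_eval_def Let_def)
qed

lemma homogenize_eval_affine:
  assumes fin: "finite P" and nz: "\<forall>\<gamma>\<in>{\<gamma>\<in>P. c \<gamma> \<noteq> 0}. fst (x \<gamma>) \<noteq> 0"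
  shows "homogenize_eval P c x = (\<Prod>\<gamma>\<in>{\<gamma>\<in>P. c \<gamma> \<noteq> 0}. fst (x \<gamma>)) *
     (\<Sum>\<gamma>\<in>{\<gamma>\<in>P. c \<gamma> \<noteq> 0}. c \<gamma> * (snd (x \<gamma>) / fst (x \<gamma>)))"
  unfolding homogenize_eval_def Let_def sum_distrib_left
proof (rule sum.cong[OF refl])
  fix \<gamma> assume \<gamma>: "\<gamma> \<in> {\<gamma>\<in>P. c \<gamma> \<noteq> 0}"
  have "(\<Prod>\<mu>\<in>{\<gamma>\<in>P. c \<gamma> \<noteq> 0}. fst (x \<mu>)) = fst (x \<gamma>) * (\<Prod>\<mu>\<in>{\<gamma>\<in>P. c \<gamma> \<noteq> 0} - {\<gamma>}. fst (x \<mu>))"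
    using fin \<gamma> by (intro prod.remove) auto
  then show "c \<gamma> * snd (x \<gamma>) * (\<Prod>\<mu>\<in>{\<gamma>\<in>P. c \<gamma> \<noteq> 0} - {\<gamma>}. fst (x \<mu>)) =
      (\<Prod>\<mu>\<in>{\<gamma>\<in>P. c \<gamma> \<noteq> 0}. fst (x \<mu>)) * (c \<gamma> * (snd (x \<gamma>) / fst (x \<gamma>)))"
    using nz \<gamma> by simp
qed

lemma homogenize_eval_one_infinite:
  assumes fin: "finite P" and \<mu>: "\<mu> \<in> P" "c \<mu> \<noteq> 0" "fst (x \<mu>) = 0"
  shows "homogenize_eval P c x = c \<mu> * snd (x \<mu>) * (\<Prod>\<gamma>\<in>{\<gamma>\<in>P. c \<gamma> \<noteq> 0} - {\<mu>}. fst (x \<gamma>))"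
proof -
  let ?S = "{\<gamma>\<in>P. c \<gamma> \<noteq> 0}"
  have "(\<Prod>\<nu>\<in>?S - {\<gamma>}. fst (x \<nu>)) = 0" if "\<gamma> \<in> ?S - {\<mu>}" for \<gamma>
    using that fin \<mu> by (intro prod_zero) auto
  then have rest: "(\<Sum>\<gamma>\<in>?S - {\<mu>}. c \<gamma> * snd (x \<gamma>) * (\<Prod>\<nu>\<in>?S - {\<gamma>}. fst (x \<nu>))) = 0"
    by (intro sum.neutral) simp
  have "homogenize_eval P c x = (\<Sum>\<gamma>\<in>?S. c \<gamma> * snd (x \<gamma>) * (\<Prod>\<nu>\<in>?S - {\<gamma>}. fst (x \<nu>)))"
    by (simp add: homogenize_eval_def Let_def)
  also have "\<dots> = c \<mu> * snd (x \<mu>) * (\<Prod>\<nu>\<in>?S - {\<mu>}. fst (x \<nu>))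
      + (\<Sum>\<gamma>\<in>?S - {\<mu>}. c \<gamma> * snd (x \<gamma>) * (\<Prod>\<nu>\<in>?S - {\<gamma>}. fst (x \<nu>)))"
    using fin \<mu> by (intro sum.remove) auto
  finally show ?thesis by (simp only: rest add_0_right)
qed

lemma zariski_closed_Zset:
  assumes fin: "finite P"
  shows "zariski_closed P (Zset P)"
  unfolding zariski_closed_def
proof (intro exI conjI)
  let ?S = "homog_poly P ` {c. \<forall>h. (\<Sum>\<gamma>\<in>P. c \<gamma> * root_eval \<gamma> h) = 0}"
  show "\<forall>p\<in>?S. mhpoly P p" using mhpoly_homog_poly[OF fin] by blast
  show "Zset P = zero_set P ?S"
    by (auto simp: Zset_def zero_set_def mh_eval_homog_poly[OF fin])
qed

lemma cartan_in_P1_subset_Zset: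
  assumes fin: "finite P"
  shows "cartan_in_P1 P \<subseteq> Zset P"
proof
  fix x assume x: "x \<in> cartan_in_P1 P"
  then obtain h where h: "\<forall>\<gamma>\<in>P. \<exists>t. t \<noteq> 0 \<and> x \<gamma> = (t, t * root_eval \<gamma> h)"
    unfolding cartan_in_P1_def by blast
  have fst_x: "fst (x \<gamma>) \<noteq> 0" and affine_x: "snd (x \<gamma>) / fst (x \<gamma>) = root_eval \<gamma> h"
    if "\<gamma> \<in> P" for \<gamma>
    using h that by auto
  have "homogenize_eval P c x = 0" if c: "\<forall>h. (\<Sum>\<gamma>\<in>P. c \<gamma> * root_eval \<gamma> h) = 0" for c
  proof -
    have "homogenize_eval P c x = (\<Prod>\<gamma>\<in>{\<gamma>\<in>P. c \<gamma> \<noteq> 0}. fst (x \<gamma>)) *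
       (\<Sum>\<gamma>\<in>{\<gamma>\<in>P. c \<gamma> \<noteq> 0}. c \<gamma> * (snd (x \<gamma>) / fst (x \<gamma>)))"
      using fin fst_x by (intro homogenize_eval_affine) auto
    also have "(\<Sum>\<gamma>\<in>{\<gamma>\<in>P. c \<gamma> \<noteq> 0}. c \<gamma> * (snd (x \<gamma>) / fst (x \<gamma>)))
        = (\<Sum>\<gamma>\<in>{\<gamma>\<in>P. c \<gamma> \<noteq> 0}. c \<gamma> * root_eval \<gamma> h)"
      by (rule sum.cong) (auto simp: affine_x)
    also have "(\<Sum>\<gamma>\<in>{\<gamma>\<in>P. c \<gamma> \<noteq> 0}. c \<gamma> * root_eval \<gamma> h) = (\<Sum>\<gamma>\<in>P. c \<gamma> * root_eval \<gamma> h)"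
      using fin by (intro sum.mono_neutral_left) auto
    finally show ?thesis using c by simp
  qed
  then show "x \<in> Zset P" using x by (simp add: Zset_def cartan_in_P1_def)
qed

lemma zariski_closure_subset_Zset:
  assumes "finite P"
  shows "zariski_closure P (cartan_in_P1 P) \<subseteq> Zset P"
  unfolding zariski_closure_def
  using zariski_closed_Zset[OF assms] cartan_in_P1_subset_Zset[OF assms] by blast

lemma Zset_real_relation:
  assumes fin: "finite P" and x: "x \<in> Zset P" and S: "S \<subseteq> P" "(\<Sum>\<gamma>\<in>S. c \<gamma> *\<^sub>R \<gamma>) = 0"
  shows "homogenize_eval P (\<lambda>\<gamma>. if \<gamma> \<in> S then complex_of_real (c \<gamma>) else 0) x = 0"
proof -
  have "(\<Sum>\<gamma>\<in>P. (if \<gamma> \<in> S then complex_of_real (c \<gamma>) else 0) * root_eval \<gamma> h) = 0" for h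
  proof -
    have "(\<Sum>\<gamma>\<in>P. (if \<gamma> \<in> S then complex_of_real (c \<gamma>) else 0) * root_eval \<gamma> h)
        = (\<Sum>\<gamma>\<in>S. complex_of_real (c \<gamma>) * root_eval \<gamma> h)"
      using fin S(1) by (simp add: if_distrib[of "\<lambda>r. r * _"] sum.inter_restrict[symmetric] Int_absorb1 cong: if_cong)
    also have "\<dots> = 0" unfolding root_eval_sum_scaleR S(2) by (simp add: root_eval_def)
    finally show ?thesis .
  qed
  then show ?thesis using x by (simp add: Zset_def)
qed

lemma Zset_affine_relation:
  assumes fin: "finite P" and x: "x \<in> Zset P"
    and c: "(\<Sum>\<gamma>\<in>{\<gamma>\<in>P. fst (x \<gamma>) \<noteq> 0}. c \<gamma> *\<^sub>R \<gamma>) = 0"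
  shows "(\<Sum>\<gamma>\<in>{\<gamma>\<in>P. fst (x \<gamma>) \<noteq> 0}. complex_of_real (c \<gamma>) * (snd (x \<gamma>) / fst (x \<gamma>))) = 0"
proof -
  define F where "F = {\<gamma>\<in>P. fst (x \<gamma>) \<noteq> 0}"
  define c' where "c' \<gamma> = (if \<gamma> \<in> F then complex_of_real (c \<gamma>) else 0)" for \<gamma>
  let ?S = "{\<gamma>\<in>P. c' \<gamma> \<noteq> 0}"
  have SF: "?S \<subseteq> F" by (auto simp: c'_def split: if_splits)
  then have "\<forall>\<gamma>\<in>?S. fst (x \<gamma>) \<noteq> 0" by (auto simp: F_def)
  moreover have "homogenize_eval P c' x = 0"
    unfolding c'_def F_def by (rule Zset_real_relation[OF fin x _ c]) auto
  ultimately have "(\<Sum>\<gamma>\<in>?S. c' \<gamma> * (snd (x \<gamma>) / fst (x \<gamma>))) = 0"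
    using fin by (simp add: homogenize_eval_affine)
  moreover have "(\<Sum>\<gamma>\<in>F. c' \<gamma> * (snd (x \<gamma>) / fst (x \<gamma>))) = (\<Sum>\<gamma>\<in>?S. c' \<gamma> * (snd (x \<gamma>) / fst (x \<gamma>)))"
    using fin SF by (intro sum.mono_neutral_right) (auto simp: F_def)
  ultimately show ?thesis by (simp add: F_def c'_def)
qed

lemma Zset_infinite_not_in_span:
  assumes fin: "finite P" and x: "x \<in> Zset P" and \<mu>: "\<mu> \<in> P" "fst (x \<mu>) = 0"
  shows "\<mu> \<notin> span {\<gamma>\<in>P. fst (x \<gamma>) \<noteq> 0}"
proof
  define F where "F = {\<gamma>\<in>P. fst (x \<gamma>) \<noteq> 0}"
  assume "\<mu> \<in> span {\<gamma>\<in>P. fst (x \<gamma>) \<noteq> 0}"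
  then obtain u where u: "(\<Sum>\<gamma>\<in>F. u \<gamma> *\<^sub>R \<gamma>) = \<mu>"
    using fin span_finite[of F] by (auto simp: F_def)
  have \<mu>F: "\<mu> \<notin> F" using \<mu> by (simp add: F_def)
  \<comment> \<open>The relation \<mu> - \<Sum> u \<gamma> \<gamma> has a single term at infinity, so its homogenization is the
    nonzero monomial x_{\<mu>,1} * prod x_{\<gamma>,0}.\<close>
  define c where "c \<gamma> = (if \<gamma> = \<mu> then 1 else - u \<gamma>)" for \<gamma>
  define c' where "c' \<gamma> = (if \<gamma> \<in> insert \<mu> F then complex_of_real (c \<gamma>) else 0)" for \<gamma>
  have "(\<Sum>\<gamma>\<in>F. c \<gamma> *\<^sub>R \<gamma>) = (\<Sum>\<gamma>\<in>F. - (u \<gamma> *\<^sub>R \<gamma>))"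
    using \<mu>F by (intro sum.cong) (auto simp: c_def)
  then have "(\<Sum>\<gamma>\<in>insert \<mu> F. c \<gamma> *\<^sub>R \<gamma>) = 0"
    using fin \<mu>F u by (simp add: F_def c_def sum_negf)
  then have "homogenize_eval P c' x = 0"
    unfolding c'_def using \<mu> fin by (intro Zset_real_relation[OF fin x]) (auto simp: F_def)
  moreover have "c' \<mu> = 1" by (simp add: c'_def c_def)
  moreover have "homogenize_eval P c' x =
      c' \<mu> * snd (x \<mu>) * (\<Prod>\<gamma>\<in>{\<gamma>\<in>P. c' \<gamma> \<noteq> 0} - {\<mu>}. fst (x \<gamma>))"
    using fin \<mu> by (intro homogenize_eval_one_infinite) (auto simp: c'_def c_def)
  moreover have "snd (x \<mu>) \<noteq> 0"
    using x \<mu> by (auto simp: Zset_def P1pts_def prod_eq_iff)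
  moreover have "\<forall>\<gamma>\<in>{\<gamma>\<in>P. c' \<gamma> \<noteq> 0} - {\<mu>}. fst (x \<gamma>) \<noteq> 0"
    by (auto simp: c'_def F_def)
  ultimately show False using fin by simp
qed

lemma limit_in_zariski_closure:
  fixes x :: "'a \<Rightarrow> complex \<times> complex" and A B :: "'a \<Rightarrow> complex \<Rightarrow> complex"
  assumes x: "x \<in> P1pts P" "\<And>\<gamma>. x \<gamma> = (A \<gamma> 0, B \<gamma> 0)"
    and cont: "\<And>\<gamma>. isCont (A \<gamma>) 0" "\<And>\<gamma>. isCont (B \<gamma>) 0"
    and curve: "\<And>u. u \<noteq> 0 \<Longrightarrow> (\<lambda>\<gamma>. (A \<gamma> u, B \<gamma> u)) \<in> Q"
  shows "x \<in> zariski_closure P Q"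
  unfolding zariski_closure_def
proof (rule InterI)
  fix C assume "C \<in> {C. zariski_closed P C \<and> Q \<subseteq> C}"
  then obtain S where S: "C = zero_set P S" and QC: "Q \<subseteq> C"
    unfolding zariski_closed_def by blast
  have "mh_eval P p x = 0" if p: "p \<in> S" for p
  proof -
    define f where "f u = mh_eval P p (\<lambda>\<gamma>. (A \<gamma> u, B \<gamma> u))" for u
    have "isCont f 0"
      unfolding f_def mh_eval_def by (intro continuous_intros cont)
    moreover have "\<forall>\<^sub>F u in at 0. f u = 0"
      unfolding eventually_at_filter
      by (rule always_eventually) (use curve QC S p in \<open>auto simp: f_def zero_set_def\<close>)
    ultimately have "f 0 = 0"
      by (metis isCont_def tendsto_eventually tendsto_unique trivial_limit_at)
    moreover have "(\<lambda>\<gamma>. (A \<gamma> 0, B \<gamma> 0)) = x" using x(2) by auto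
    ultimately show ?thesis by (simp add: f_def)
  qed
  then show "x \<in> C" using S x(1) by (simp add: zero_set_def)
qed

text \<open>The curve u -> h0 + h1/u: coordinates with lambda(h1) = 0 stay at [1:lambda(h0)], the
  others tend to infinity.\<close>

lemma degenerate_limit_in_zariski_closure:
  assumes x: "x \<in> P1pts P"
    and h0: "\<And>\<gamma>. \<gamma> \<in> P \<Longrightarrow> fst (x \<gamma>) \<noteq> 0 \<Longrightarrow> root_eval \<gamma> h0 = snd (x \<gamma>) / fst (x \<gamma>)"
    and h1_finite: "\<And>\<gamma>. \<gamma> \<in> P \<Longrightarrow> fst (x \<gamma>) \<noteq> 0 \<Longrightarrow> root_eval \<gamma> h1 = 0"
    and h1_infinite: "\<And>\<gamma>. \<gamma> \<in> P \<Longrightarrow> fst (x \<gamma>) = 0 \<Longrightarrow> root_eval \<gamma> h1 \<noteq> 0"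
  shows "x \<in> zariski_closure P (cartan_in_P1 P)"
proof -
  define T where "T = {\<gamma>\<in>P. fst (x \<gamma>) = 0}"
  define k where "k \<gamma> = snd (x \<gamma>) / root_eval \<gamma> h1" for \<gamma>
  define A where "A \<gamma> u = (if \<gamma> \<in> T then k \<gamma> * u else fst (x \<gamma>))" for \<gamma> u
  define B where "B \<gamma> u = (if \<gamma> \<in> T then k \<gamma> * (u * root_eval \<gamma> h0 + root_eval \<gamma> h1)
      else snd (x \<gamma>))" for \<gamma> u
  have k: "k \<gamma> \<noteq> 0" "k \<gamma> * root_eval \<gamma> h1 = snd (x \<gamma>)" if "\<gamma> \<in> T" for \<gamma>
    using x that h1_infinite by (auto simp: k_def T_def P1pts_def prod_eq_iff)
  have "(\<lambda>\<gamma>. (A \<gamma> u, B \<gamma> u)) \<in> cartan_in_P1 P" if u: "u \<noteq> 0" for u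
  proof -
    define h where "h = (\<chi> i. h0 $ i + (1 / u) * h1 $ i)"
    have root_eval_h: "root_eval \<gamma> h = root_eval \<gamma> h0 + (1 / u) * root_eval \<gamma> h1" for \<gamma>
      unfolding h_def by (rule root_eval_add_scaled)
    have "\<exists>t. t \<noteq> 0 \<and> (A \<gamma> u, B \<gamma> u) = (t, t * root_eval \<gamma> h)" if \<gamma>: "\<gamma> \<in> P" for \<gamma>
    proof (cases "\<gamma> \<in> T")
      case True
      with k u show ?thesis
        by (intro exI[of _ "k \<gamma> * u"]) (simp add: A_def B_def root_eval_h field_simps)
    next
      case False
      with \<gamma> show ?thesis
        by (intro exI[of _ "fst (x \<gamma>)"])
          (simp add: A_def B_def root_eval_h T_def h0 h1_finite)
    qed
    moreover have "(A \<gamma> u, B \<gamma> u) = (0, 0)" if "\<gamma> \<notin> P" for \<gamma>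
      using x that by (simp add: A_def B_def T_def P1pts_def)
    ultimately show ?thesis
      unfolding cartan_in_P1_def P1pts_def by fastforce
  qed
  moreover have "x \<gamma> = (A \<gamma> 0, B \<gamma> 0)" for \<gamma>
    using k by (auto simp: A_def B_def T_def prod_eq_iff)
  moreover have "isCont (A \<gamma>) 0" for \<gamma>
    by (cases "\<gamma> \<in> T") (auto simp: A_def[abs_def] intro!: continuous_intros)
  moreover have "isCont (B \<gamma>) 0" for \<gamma>
    by (cases "\<gamma> \<in> T") (auto simp: B_def[abs_def] intro!: continuous_intros)
  ultimately show ?thesis
    using x by (intro limit_in_zariski_closure[of x P A B])
qed

lemma Zset_subset_zariski_closure:
  assumes fin: "finite P"
  shows "Zset P \<subseteq> zariski_closure P (cartan_in_P1 P)"
proof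
  fix x assume x: "x \<in> Zset P"
  define F where "F = {\<gamma>\<in>P. fst (x \<gamma>) \<noteq> 0}"
  define T where "T = {\<gamma>\<in>P. fst (x \<gamma>) = 0}"
  have finF: "finite F" and finT: "finite T" using fin by (simp_all add: F_def T_def)
  obtain h0 where h0: "\<forall>\<gamma>\<in>F. root_eval \<gamma> h0 = snd (x \<gamma>) / fst (x \<gamma>)"
    using exists_root_eval_eq[OF finF[unfolded F_def] Zset_affine_relation[OF fin x]]
    unfolding F_def by blast
  have "\<exists>h. (\<forall>l\<in>F. root_eval l h = 0) \<and> root_eval \<mu> h \<noteq> 0" if "\<mu> \<in> T" for \<mu>
  proof (rule exists_root_eval_separating[OF finF])
    show "\<mu> \<notin> span F"
      using that Zset_infinite_not_in_span[OF fin x] by (simp add: F_def T_def)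
  qed
  then obtain h1 where h1: "\<forall>\<gamma>\<in>F. root_eval \<gamma> h1 = 0" "\<forall>\<mu>\<in>T. root_eval \<mu> h1 \<noteq> 0"
    using exists_root_eval_avoiding[OF finT] by blast
  show "x \<in> zariski_closure P (cartan_in_P1 P)"
  proof (rule degenerate_limit_in_zariski_closure[of x P h0 h1])
    show "x \<in> P1pts P" using x by (simp add: Zset_def)
  qed (use h0 h1 in \<open>simp_all add: F_def T_def\<close>)
qed

theorem mainTheorem4:
  fixes \<Phi> \<Phi>p :: "(real ^ 'n) set"
  assumes "root_system \<Phi>" and "positive_system \<Phi> \<Phi>p"
  shows "Zset \<Phi>p = zariski_closure \<Phi>p (cartan_in_P1 \<Phi>p)"
proof -
  have "finite \<Phi>" using assms(1) unfolding root_system_def by blast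
  moreover have "\<Phi>p \<subseteq> \<Phi>" using assms(2) unfolding positive_system_def by blast
  ultimately have "finite \<Phi>p" by (rule finite_subset[rotated])
  then show ?thesis
    by (intro equalityI Zset_subset_zariski_closure zariski_closure_subset_Zset)
qed

end
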